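(* Let $N\ge2$, let $\Omega_1,\Omega_2\subset\mathbb{R}^N$ be bounded domains with $C^2$ boundary, and let $\Gamma_i\subset\partial\Omega_i$, $i=1,2$, be closed sets. Let $p\colon\bar\Omega_1\to[1,\infty)$ and $q\colon\bar\Omega_1\to[1,\infty)$ be measurable exponents. If $\Omega_2\subset\Omega_1$, $\partial\Omega_2\cap\Omega_1\subset\Gamma_2$ and $\Gamma_1\cap\partial\Omega_2\subset\Gamma_2$, then $$T(p(\cdot),q(\cdot),\Omega_1,\Gamma_1)\le T(p(\cdot),q(\cdot),\Omega_2,\Gamma_2).$$
   Context: For a domain $D$, $L^{s(x)}$ spaces carry the Luxemburg norm $\|u\|_{s(x)}=\inf\{\lambda>0:\int|u/\lambda|^{s(x)}\le1\}$ (on $\partial D$ w.r.t. surface measure). $\|u\|_{1,p(x),D}=\inf\{\lambda>0:\int_D|u/\lambda|^{p(x)}+|\nabla u/\lambda|^{p(x)}dx\le1\}$. For closed $\Gamma\subset\partial D$, $W^{1,p(x)}_\Gamma(D)$ is the closure in this norm of $\{\phi\in C^\infty(\bar D):\phi$ vanishes in a neighborhood of $\Gamma\}$, and $$T(p(\cdot),q(\cdot),D,\Gamma)=\inf_{v\in W^{1,p(x)}_\Gamma(D)}\frac{\|v\|_{1,p(x),D}}{\|v\|_{L^{q(x)}(\partial D)}},$$ the infimum over $v$ with nonzero trace. *)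

theory Defs
  imports "HOL-Analysis.Analysis"
begin

text \<open>Normalised s-dimensional Hausdorff outer measure (normalisation alpha(s) 2^(-s)
  diam^s, so that H^(N-1) restricted to a C^2 hypersurface is surface measure).\<close>

definition haus_coef :: "real \<Rightarrow> real" where
  "haus_coef s = pi powr (s / 2) / Gamma (s / 2 + 1) / 2 powr s"

definition haus_delta :: "real \<Rightarrow> real \<Rightarrow> ('a::metric_space) set \<Rightarrow> ennreal" where
  "haus_delta s \<delta> A =
     Inf {(\<Sum>i. ennreal (haus_coef s * diameter (C i) powr s)) | C.
            A \<subseteq> (\<Union>i. C i) \<and> (\<forall>i. diameter (C i) \<le> \<delta>)}"

definition hausdorff_outer :: "real \<Rightarrow> ('a::metric_space) set \<Rightarrow> ennreal" where
  "hausdorff_outer s A = (SUP \<delta>\<in>{0<..}. haus_delta s \<delta> A)"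

definition hausdorff_measure :: "real \<Rightarrow> ('a::metric_space) measure" where
  "hausdorff_measure s = measure_of UNIV (sets borel) (hausdorff_outer s)"

definition surface_measure :: "(real^'n) set \<Rightarrow> (real^'n) measure" where
  "surface_measure D = restrict_space (hausdorff_measure (real CARD('n) - 1)) (frontier D)"

definition C2_on :: "(real^'n \<Rightarrow> real) \<Rightarrow> (real^'n) set \<Rightarrow> bool" where
  "C2_on \<psi> U \<longleftrightarrow> (\<exists>g H.
      (\<forall>x\<in>U. (\<psi> has_derivative (\<lambda>h. g x \<bullet> h)) (at x)) \<and>
      (\<forall>x\<in>U. (g has_derivative (\<lambda>h. H x *v h)) (at x)) \<and>
      continuous_on U H)"

definition C2_domain :: "(real^'n) set \<Rightarrow> bool" where
  "C2_domain D \<longleftrightarrow> open D \<and> connected D \<and> D \<noteq> {} \<and> bounded D \<and>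
     (\<forall>x0\<in>frontier D. \<exists>r>0. \<exists>\<psi>. C2_on \<psi> (ball x0 r) \<and>
        (\<forall>x\<in>ball x0 r. frechet_derivative \<psi> (at x) \<noteq> (\<lambda>h. 0)) \<and>
        D \<inter> ball x0 r = {x\<in>ball x0 r. \<psi> x < 0})"

definition partial_deriv :: "(real^'n \<Rightarrow> real) \<Rightarrow> 'n \<Rightarrow> real^'n \<Rightarrow> real" where
  "partial_deriv f i x = frechet_derivative f (at x) (axis i 1)"

definition grad :: "(real^'n \<Rightarrow> real) \<Rightarrow> real^'n \<Rightarrow> real^'n" where
  "grad f x = (\<chi> i. partial_deriv f i x)"

definition smooth_fun :: "(real^'n \<Rightarrow> real) \<Rightarrow> bool" where
  "smooth_fun f \<longleftrightarrow> (\<exists>S. f \<in> S \<and>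
     (\<forall>h\<in>S. (\<forall>x. h differentiable (at x)) \<and> continuous_on UNIV h \<and>
             (\<forall>i. partial_deriv h i \<in> S)))"

text \<open>phi in C^infinity(closure D) (restriction of a smooth function on R^N) vanishing in a
  neighbourhood of Gamma.\<close>
definition test_class :: "(real^'n) set \<Rightarrow> (real^'n) set \<Rightarrow> (real^'n \<Rightarrow> real) set" where
  "test_class D \<Gamma> = {\<phi>. smooth_fun \<phi> \<and>
      (\<exists>U. open U \<and> \<Gamma> \<subseteq> U \<and> (\<forall>x\<in>U \<inter> closure D. \<phi> x = 0))}"

definition sob_norm :: "(real^'n \<Rightarrow> real) \<Rightarrow> (real^'n) set \<Rightarrow>
                        (real^'n \<Rightarrow> real) \<Rightarrow> (real^'n \<Rightarrow> real^'n) \<Rightarrow> ereal" where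
  "sob_norm p D u G = Inf {ereal t | t. t > 0 \<and>
      (\<integral>\<^sup>+ x \<in> D. ennreal (\<bar>u x / t\<bar> powr p x + (norm (G x) / t) powr p x) \<partial>lebesgue) \<le> 1}"

definition bnd_norm :: "(real^'n \<Rightarrow> real) \<Rightarrow> (real^'n) set \<Rightarrow> (real^'n \<Rightarrow> real) \<Rightarrow> ereal" where
  "bnd_norm q D g = Inf {ereal t | t. t > 0 \<and>
      (\<integral>\<^sup>+ x. ennreal (\<bar>g x / t\<bar> powr q x) \<partial>surface_measure D) \<le> 1}"

text \<open>(u, G, g): u is an element of the closure of the test class in the norm
  sob_norm, G its (weak) gradient, and g its trace on the boundary, i.e. the L^1(boundary)
  limit of the boundary values of the approximating smooth functions.\<close>
definition W_trace :: "(real^'n \<Rightarrow> real) \<Rightarrow> (real^'n) set \<Rightarrow> (real^'n) set \<Rightarrow>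
      (real^'n \<Rightarrow> real) \<Rightarrow> (real^'n \<Rightarrow> real^'n) \<Rightarrow> (real^'n \<Rightarrow> real) \<Rightarrow> bool" where
  "W_trace p D \<Gamma> u G g \<longleftrightarrow>
     u \<in> borel_measurable lebesgue \<and> G \<in> borel_measurable lebesgue \<and>
     g \<in> borel_measurable (surface_measure D) \<and>
     (\<exists>\<phi>::nat \<Rightarrow> real^'n \<Rightarrow> real. (\<forall>k. \<phi> k \<in> test_class D \<Gamma>) \<and>
        ((\<lambda>k. sob_norm p D (\<lambda>x. \<phi> k x - u x) (\<lambda>x. grad (\<phi> k) x - G x)) \<longlongrightarrow> 0) sequentially \<and>
        ((\<lambda>k. \<integral>\<^sup>+ x. ennreal \<bar>\<phi> k x - g x\<bar> \<partial>surface_measure D) \<longlongrightarrow> 0) sequentially)"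

definition T_const :: "(real^'n \<Rightarrow> real) \<Rightarrow> (real^'n \<Rightarrow> real) \<Rightarrow> (real^'n) set \<Rightarrow>
                       (real^'n) set \<Rightarrow> ereal" where
  "T_const p q D \<Gamma> = Inf {sob_norm p D u G / bnd_norm q D g | u G g.
      W_trace p D \<Gamma> u G g \<and> \<not> (AE x in surface_measure D. g x = 0)}"

end

theory Submission
  imports Defs "HOL-Computational_Algebra.Polynomial"
begin

text \<open>Every admissible quotient for \<open>(\<Omega>\<^sub>2, \<Gamma>\<^sub>2)\<close> is also admissible for \<open>(\<Omega>\<^sub>1, \<Gamma>\<^sub>1)\<close>, via extension
  by zero. A function of \<open>W\<^sub>\<Gamma>\<^sub>2(\<Omega>\<^sub>2)\<close> is approximated by smooth \<open>\<phi>\<close> vanishing on \<open>closure \<Omega>\<^sub>2\<close> near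
  \<open>\<Gamma>\<^sub>2\<close>. Multiplying \<open>\<phi>\<close> by a smooth Urysohn function that is \<open>1\<close> where \<open>\<phi>\<close> may be nonzero and \<open>0\<close> near
  \<open>\<Gamma>\<^sub>1\<close> and near \<open>\<Omega>\<^sub>1 \<setminus> closure \<Omega>\<^sub>2\<close> gives test functions for \<open>(\<Omega>\<^sub>1, \<Gamma>\<^sub>1)\<close> that agree with
  the zero extension of \<open>\<phi>\<close>. The two sets to be separated are disjoint because
  \<open>closure \<Omega>\<^sub>2 \<inter> closure (\<Omega>\<^sub>1 \<setminus> closure \<Omega>\<^sub>2) \<subseteq> \<Gamma>\<^sub>2\<close>, which uses that a \<open>C\<^sup>2\<close> domain is locally connected
  at its boundary. The zero extension has the same Sobolev norm, and since its trace vanishes on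
  \<open>\<Gamma>\<^sub>2 \<supseteq> \<partial>\<Omega>\<^sub>2 \<setminus> \<partial>\<Omega>\<^sub>1\<close>, also the same boundary norm and the same nontriviality.\<close>

subsection \<open>Smooth functions\<close>

lemma smooth_fun_coinduct:
  assumes "P h"
    and "\<And>h. P h \<Longrightarrow> (\<forall>x. h differentiable (at x)) \<and> (\<forall>i. P (partial_deriv h i))"
  shows "smooth_fun h"
proof -
  have "continuous_on UNIV h" if "\<forall>x. h differentiable (at x)" for h :: "real^'n \<Rightarrow> real"
    using that by (simp add: differentiable_imp_continuous_on differentiable_at_imp_differentiable_on)
  then show ?thesis
    unfolding smooth_fun_def using assms by (intro exI[of _ "Collect P"]) auto
qed

lemma smooth_fun_partial_deriv:
  assumes "smooth_fun h"
  shows "smooth_fun (partial_deriv h i)"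
  using assms unfolding smooth_fun_def by blast

lemma smooth_fun_has_derivative:
  assumes "smooth_fun h"
  shows "(h has_derivative frechet_derivative h (at x)) (at x)"
  using assms frechet_derivative_works unfolding smooth_fun_def by blast

lemma smooth_fun_continuous_on: "smooth_fun h \<Longrightarrow> continuous_on S h"
  unfolding smooth_fun_def by (blast intro: continuous_on_subset)

lemma partial_deriv_eq:
  assumes "(h has_derivative D) (at x)"
  shows "partial_deriv h i x = D (axis i 1)"
  unfolding partial_deriv_def using frechet_derivative_at[OF assms] by simp

definition sum_prods :: "((real^'n \<Rightarrow> real) \<times> (real^'n \<Rightarrow> real)) list \<Rightarrow> real^'n \<Rightarrow> real" where
  "sum_prods L x = (\<Sum>(a,b)\<leftarrow>L. a x * b x)"

lemma sum_prods_has_derivative: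
  assumes "\<forall>(a,b)\<in>set L. smooth_fun a \<and> smooth_fun b"
  shows "(sum_prods L has_derivative (\<lambda>v. \<Sum>(a,b)\<leftarrow>L. a x * frechet_derivative b (at x) v
            + frechet_derivative a (at x) v * b x)) (at x)"
  using assms
proof (induction L)
  case Nil
  then show ?case by (simp add: sum_prods_def)
next
  case (Cons ab L)
  obtain a b where ab: "ab = (a,b)" by fastforce
  with Cons.prems have "smooth_fun a" "smooth_fun b" by auto
  then have "((\<lambda>x. a x * b x + sum_prods L x) has_derivative
     (\<lambda>v. (a x * frechet_derivative b (at x) v + frechet_derivative a (at x) v * b x) +
       (\<Sum>(a,b)\<leftarrow>L. a x * frechet_derivative b (at x) v + frechet_derivative a (at x) v * b x))) (at x)"
    using Cons by (intro has_derivative_add has_derivative_mult smooth_fun_has_derivative Cons.IH) auto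
  then show ?case by (simp add: sum_prods_def ab)
qed

lemma partial_deriv_sum_prods:
  assumes "\<forall>(a,b)\<in>set L. smooth_fun a \<and> smooth_fun b"
  shows "partial_deriv (sum_prods L) i =
    sum_prods (concat (map (\<lambda>(a,b). [(a, partial_deriv b i), (partial_deriv a i, b)]) L))"
proof
  fix x
  show "partial_deriv (sum_prods L) i x = sum_prods (concat (map (\<lambda>(a,b). [(a, partial_deriv b i), (partial_deriv a i, b)]) L)) x"
    unfolding partial_deriv_eq[OF sum_prods_has_derivative[OF assms]]
  proof (induction L)
    case (Cons ab L)
    obtain a b where "ab = (a,b)" by fastforce
    with Cons show ?case by (simp add: sum_prods_def partial_deriv_def)
  qed (simp add: sum_prods_def)
qed

lemma smooth_sum_prods:
  assumes "\<forall>(a,b)\<in>set L. smooth_fun a \<and> smooth_fun b"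
  shows "smooth_fun (sum_prods L)"
proof (rule smooth_fun_coinduct[where P="\<lambda>h. \<exists>L. h = sum_prods L \<and> (\<forall>(a,b)\<in>set L. smooth_fun a \<and> smooth_fun b)"])
  fix h assume "\<exists>L. h = sum_prods L \<and> (\<forall>(a,b)\<in>set L. smooth_fun a \<and> smooth_fun b)"
  then obtain L where h: "h = sum_prods L" and L: "\<forall>(a,b)\<in>set L. smooth_fun a \<and> smooth_fun b"
    by blast
  have "\<forall>x. h differentiable (at x)"
    using h sum_prods_has_derivative[OF L] differentiable_def by blast
  moreover have "\<forall>(a,b)\<in>set (concat (map (\<lambda>(a,b). [(a, partial_deriv b i), (partial_deriv a i, b)]) L)).
          smooth_fun a \<and> smooth_fun b" for i
    using L smooth_fun_partial_deriv by fastforce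
  ultimately show "(\<forall>x. h differentiable (at x)) \<and>
      (\<forall>i. \<exists>L. partial_deriv h i = sum_prods L \<and> (\<forall>(a,b)\<in>set L. smooth_fun a \<and> smooth_fun b))"
    using h partial_deriv_sum_prods[OF L] by blast
qed (use assms in blast)

lemma smooth_const: "smooth_fun (\<lambda>x. c)"
proof (rule smooth_fun_coinduct[where P="\<lambda>h. \<exists>c. h = (\<lambda>x. c)"])
  fix h :: "real^'n \<Rightarrow> real" assume "\<exists>c. h = (\<lambda>x. c)"
  then obtain c where h: "h = (\<lambda>x. c)" by blast
  then have "partial_deriv h i = (\<lambda>x. 0)" for i
    using partial_deriv_eq[of h "\<lambda>v. 0"] by auto
  then show "(\<forall>x. h differentiable (at x)) \<and> (\<forall>i. \<exists>c. partial_deriv h i = (\<lambda>x. c))"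
    using h by auto
qed auto

lemma smooth_mult:
  assumes "smooth_fun a" "smooth_fun b"
  shows "smooth_fun (\<lambda>x. a x * b x)"
proof -
  have "sum_prods [(a,b)] = (\<lambda>x. a x * b x)" by (auto simp: sum_prods_def)
  then show ?thesis using smooth_sum_prods[of "[(a,b)]"] assms by simp
qed

lemma smooth_add:
  assumes "smooth_fun a" "smooth_fun b"
  shows "smooth_fun (\<lambda>x. a x + b x)"
proof -
  have eq: "sum_prods [(a,\<lambda>x. 1),(b,\<lambda>x. 1)] = (\<lambda>x. a x + b x)" by (auto simp: sum_prods_def)
  have "\<forall>(a,b)\<in>set [(a,\<lambda>x. 1),(b,\<lambda>x. 1)]. smooth_fun a \<and> smooth_fun b"
    using assms smooth_const by auto
  from smooth_sum_prods[OF this] show ?thesis unfolding eq .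
qed

lemma smooth_diff:
  assumes "smooth_fun a" "smooth_fun b"
  shows "smooth_fun (\<lambda>x. a x - b x)"
  using smooth_add[OF assms(1) smooth_mult[OF smooth_const assms(2), of "-1"]] by simp

lemma smooth_power:
  assumes "smooth_fun a"
  shows "smooth_fun (\<lambda>x. a x ^ n)"
  by (induction n) (simp_all add: smooth_const smooth_mult[OF assms])

lemma smooth_sum:
  assumes "finite I" "\<And>i. i \<in> I \<Longrightarrow> smooth_fun (f i)"
  shows "smooth_fun (\<lambda>x. \<Sum>i\<in>I. f i x)"
  using assms by (induction I rule: finite_induct) (simp_all add: smooth_const smooth_add)

lemma smooth_component: "smooth_fun (\<lambda>x::real^'n. x $ j)"
proof (rule smooth_fun_coinduct[where P="\<lambda>h. h = (\<lambda>x. x $ j) \<or> smooth_fun h"])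
  fix h :: "real^'n \<Rightarrow> real" assume "h = (\<lambda>x. x $ j) \<or> smooth_fun h"
  then show "(\<forall>x. h differentiable (at x)) \<and> (\<forall>i. partial_deriv h i = (\<lambda>x. x $ j) \<or> smooth_fun (partial_deriv h i))"
  proof
    assume h: "h = (\<lambda>x. x $ j)"
    have hd: "(h has_derivative (\<lambda>v. v $ j)) (at x)" for x
      unfolding h by (rule bounded_linear_imp_has_derivative) (rule bounded_linear_vec_nth)
    then have "partial_deriv h i = (\<lambda>x. axis i 1 $ j)" for i
      using partial_deriv_eq[OF hd] by auto
    with hd show ?thesis by (auto simp: differentiable_def smooth_const)
  qed (use smooth_fun_partial_deriv smooth_fun_has_derivative differentiable_def in blast)
qed simp

lemma smooth_sqdist: "smooth_fun (\<lambda>x::real^'n. norm (x - c) ^ 2)"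
proof -
  have "norm (x - c) ^ 2 = (\<Sum>i\<in>UNIV. (x$i - c$i) * (x$i - c$i))" for x :: "real^'n"
    by (simp add: power2_norm_eq_inner inner_vec_def)
  moreover have "smooth_fun (\<lambda>x::real^'n. \<Sum>i\<in>UNIV. (x$i - c$i) * (x$i - c$i))"
    by (intro smooth_sum smooth_mult smooth_diff smooth_component smooth_const) simp
  ultimately show ?thesis by simp
qed

text \<open>If each \<open>f n\<close> has derivative \<open>f (Suc n)\<close>, every \<open>f n \<circ> \<rho>\<close> with \<open>\<rho>\<close> smooth stays in the class of
  sums \<open>\<Sum> a\<^sub>k \<cdot> f k \<circ> \<rho>\<close> with smooth coefficients, which is closed under partial derivatives.\<close>

lemma smooth_comp_derivative_tower:
  assumes f: "\<And>n t. (f n has_real_derivative f (Suc n) t) (at t)"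
    and \<rho>: "smooth_fun \<rho>"
  shows "smooth_fun (\<lambda>x. f n (\<rho> x))"
proof (rule smooth_fun_coinduct[where P="\<lambda>h. \<exists>L. h = (\<lambda>x. \<Sum>(a,k)\<leftarrow>L. a x * f k (\<rho> x)) \<and> (\<forall>(a,k)\<in>set L. smooth_fun a)"])
  show "\<exists>L. (\<lambda>x. f n (\<rho> x)) = (\<lambda>x. \<Sum>(a,k)\<leftarrow>L. a x * f k (\<rho> x)) \<and> (\<forall>(a,k)\<in>set L. smooth_fun a)"
    by (rule exI[of _ "[(\<lambda>x. 1, n)]"]) (simp add: smooth_const)
next
  fix h assume "\<exists>L. h = (\<lambda>x. \<Sum>(a,k)\<leftarrow>L. a x * f k (\<rho> x)) \<and> (\<forall>(a,k)\<in>set L. smooth_fun a)"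
  then obtain L where h: "h = (\<lambda>x. \<Sum>(a,k)\<leftarrow>L. a x * f k (\<rho> x))" and L: "\<forall>(a,k)\<in>set L. smooth_fun a"
    by blast
  have chain: "((\<lambda>x. f k (\<rho> x)) has_derivative (\<lambda>v. f (Suc k) (\<rho> x) * frechet_derivative \<rho> (at x) v)) (at x)"
    for k x
    using has_derivative_compose[OF smooth_fun_has_derivative[OF \<rho>] f[unfolded has_field_derivative_def]]
    by (simp add: o_def)
  have hd: "(h has_derivative (\<lambda>v. \<Sum>(a,k)\<leftarrow>L. a x * (f (Suc k) (\<rho> x) * frechet_derivative \<rho> (at x) v)
      + frechet_derivative a (at x) v * f k (\<rho> x))) (at x)" for x
    unfolding h using L
  proof (induction L)
    case (Cons ak L)
    obtain a k where ak: "ak = (a,k)" by fastforce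
    with Cons.prems have "smooth_fun a" by auto
    then show ?case
      using has_derivative_add[OF has_derivative_mult[OF smooth_fun_has_derivative chain] Cons.IH] Cons.prems
      by (simp add: ak)
  qed simp
  let ?L' = "\<lambda>i. concat (map (\<lambda>(a,k). [(partial_deriv a i, k), (\<lambda>x. a x * partial_deriv \<rho> i x, Suc k)]) L)"
  have "partial_deriv h i = (\<lambda>x. \<Sum>(a,k)\<leftarrow>?L' i. a x * f k (\<rho> x))" for i
    unfolding partial_deriv_eq[OF hd]
  proof (rule ext, induction L)
    case (Cons ak L)
    obtain a k where "ak = (a,k)" by fastforce
    with Cons show ?case by (simp add: partial_deriv_def algebra_simps)
  qed simp
  moreover have "\<forall>(a,k)\<in>set (?L' i). smooth_fun a" for i
    using L smooth_fun_partial_deriv smooth_mult \<rho> by fastforce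
  ultimately show "(\<forall>x. h differentiable (at x)) \<and>
    (\<forall>i. \<exists>L. partial_deriv h i = (\<lambda>x. \<Sum>(a,k)\<leftarrow>L. a x * f k (\<rho> x)) \<and> (\<forall>(a,k)\<in>set L. smooth_fun a))"
    using hd differentiable_def by blast
qed

lemma smooth_divide:
  assumes D: "smooth_fun D" "\<And>x. D x \<noteq> 0" and a: "smooth_fun a"
  shows "smooth_fun (\<lambda>x. a x / D x)"
proof (rule smooth_fun_coinduct[where P="\<lambda>h. \<exists>a n. h = (\<lambda>x. a x / D x ^ n) \<and> smooth_fun a"])
  show "\<exists>b n. (\<lambda>x. a x / D x) = (\<lambda>x. b x / D x ^ n) \<and> smooth_fun b"
    using a by (intro exI[of _ a] exI[of _ 1]) simp
next
  fix h assume "\<exists>a n. h = (\<lambda>x. a x / D x ^ n) \<and> smooth_fun a"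
  then obtain b n where h: "h = (\<lambda>x. b x / D x ^ n)" and b: "smooth_fun b" by blast
  have hd: "(h has_derivative (\<lambda>v. (frechet_derivative b (at x) v * D x ^ n
       - b x * (of_nat n * frechet_derivative D (at x) v * D x ^ (n - 1))) / (D x ^ n * D x ^ n))) (at x)" for x
    unfolding h
    by (rule has_derivative_divide'[OF smooth_fun_has_derivative[OF b]
          has_derivative_power[OF smooth_fun_has_derivative[OF D(1)]]])
       (simp add: D(2))
  have "partial_deriv h i = (\<lambda>x. (partial_deriv b i x * D x ^ n
       - b x * (of_nat n * partial_deriv D i x * D x ^ (n - 1))) / D x ^ (n + n))" for i
    by (rule ext, unfold partial_deriv_eq[OF hd]) (simp add: partial_deriv_def power_add)
  moreover have "smooth_fun (\<lambda>x. partial_deriv b i x * D x ^ n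
       - b x * (of_nat n * partial_deriv D i x * D x ^ (n - 1)))" for i
    by (intro smooth_diff smooth_mult smooth_power smooth_const b D(1) smooth_fun_partial_deriv)
  ultimately show "(\<forall>x. h differentiable (at x)) \<and>
    (\<forall>i. \<exists>a n. partial_deriv h i = (\<lambda>x. a x / D x ^ n) \<and> smooth_fun a)"
    using hd by (auto simp: differentiable_def)
qed

subsection \<open>Smooth Urysohn functions\<close>

text \<open>\<open>flat n\<close> is the \<open>n\<close>-th derivative of \<open>t \<mapsto> exp (-1/t)\<close> (extended by \<open>0\<close> for \<open>t \<le> 0\<close>); on \<open>t > 0\<close>
  it has the form \<open>flat_poly n (1/t) \<cdot> exp (-1/t)\<close>.\<close>

fun flat_poly :: "nat \<Rightarrow> real poly" where
  "flat_poly 0 = 1"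
| "flat_poly (Suc n) = [:0,0,1:] * (flat_poly n - pderiv (flat_poly n))"

definition flat :: "nat \<Rightarrow> real \<Rightarrow> real" where
  "flat n t = (if t > 0 then poly (flat_poly n) (1/t) * exp (-(1/t)) else 0)"

lemma poly_inverse_exp_has_derivative:
  assumes t: "t > 0"
  shows "((\<lambda>t. poly P (1/t) * exp (-(1/t))) has_real_derivative
           poly ([:0,0,1:] * (P - pderiv P)) (1/t) * exp (-(1/t))) (at t)"
proof -
  have "((\<lambda>t. poly P (1/t) * exp (-(1/t))) has_real_derivative
     (poly (pderiv P) (1/t) * (- 1 / t^2)) * exp (-(1/t)) + poly P (1/t) * (exp (-(1/t)) * (1/t^2))) (at t)"
    using t by (auto intro!: derivative_eq_intros simp: power2_eq_square field_simps)
  moreover have "(poly (pderiv P) (1/t) * (- 1 / t^2)) * exp (-(1/t)) + poly P (1/t) * (exp (-(1/t)) * (1/t^2))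
     = poly ([:0,0,1:] * (P - pderiv P)) (1/t) * exp (-(1/t))"
    by (simp add: algebra_simps power2_eq_square divide_simps)
  ultimately show ?thesis by simp
qed

lemma poly_times_exp_neg_tendsto_0: "((\<lambda>s. poly P s * s / exp s) \<longlongrightarrow> (0::real)) at_top"
proof -
  have "((\<lambda>s. \<Sum>i\<le>degree P. coeff P i * (s ^ Suc i / exp s)) \<longlongrightarrow> (\<Sum>i\<le>degree P. coeff P i * 0)) at_top"
    by (intro tendsto_sum tendsto_mult tendsto_const tendsto_power_div_exp_0)
  moreover have "(\<Sum>i\<le>degree P. coeff P i * (s ^ Suc i / exp s)) = poly P s * s / exp s" for s
    unfolding poly_altdef sum_distrib_right sum_divide_distrib
    by (rule sum.cong) (simp_all add: algebra_simps)
  ultimately show ?thesis by simp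
qed

lemma flat_has_derivative_at_0: "(flat n has_real_derivative 0) (at 0)"
proof -
  have right: "((\<lambda>h. (flat n (0 + h) - flat n 0) / h) \<longlongrightarrow> 0) (at_right 0)"
  proof -
    have "((\<lambda>h. (\<lambda>s. poly (flat_poly n) s * s / exp s) (inverse h)) \<longlongrightarrow> 0) (at_right (0::real))"
      using filterlim_compose[OF poly_times_exp_neg_tendsto_0 filterlim_inverse_at_top_right] .
    moreover have "eventually (\<lambda>h. (\<lambda>s. poly (flat_poly n) s * s / exp s) (inverse h) =
        (flat n (0 + h) - flat n 0) / h) (at_right 0)"
      by (rule eventually_at_rightI[of 0 1]) (simp_all add: flat_def exp_minus divide_inverse mult_ac)
    ultimately show ?thesis using tendsto_cong by fast
  qed
  have "eventually (\<lambda>h. 0 = (flat n (0 + h) - flat n 0) / h) (at_left (0::real))"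
    by (rule eventually_at_leftI[of "-1"]) (auto simp: flat_def)
  then have left: "((\<lambda>h. (flat n (0 + h) - flat n 0) / h) \<longlongrightarrow> 0) (at_left 0)"
    using tendsto_cong[of "\<lambda>h. 0"] tendsto_const by fast
  show ?thesis unfolding DERIV_def using filterlim_split_at[OF left right] .
qed

lemma flat_has_derivative: "(flat n has_real_derivative flat (Suc n) t) (at t)"
proof (cases t "0::real" rule: linorder_cases)
  case less
  have "((\<lambda>t. 0) has_real_derivative 0) (at t)" by simp
  then have "(flat n has_real_derivative 0) (at t)"
    by (rule has_field_derivative_transform_within_open[where S="{..<0}"]) (use less in \<open>auto simp: flat_def\<close>)
  then show ?thesis using less by (simp add: flat_def)
next
  case equal
  then show ?thesis using flat_has_derivative_at_0[of n] by (simp add: flat_def)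
next
  case greater
  have "((\<lambda>t. poly (flat_poly n) (1/t) * exp (-(1/t))) has_real_derivative flat (Suc n) t) (at t)"
    using poly_inverse_exp_has_derivative[OF greater, of "flat_poly n"] greater by (simp add: flat_def)
  then show ?thesis
    by (rule has_field_derivative_transform_within_open[where S="{0<..}"]) (use greater in \<open>auto simp: flat_def\<close>)
qed

lemma flat_pos: "t > 0 \<Longrightarrow> flat 0 t > 0"
  and flat_nonpos: "t \<le> 0 \<Longrightarrow> flat 0 t = 0"
  and flat_nonneg: "flat 0 t \<ge> 0"
  by (simp_all add: flat_def)

lemma smooth_flat: "smooth_fun \<rho> \<Longrightarrow> smooth_fun (\<lambda>x. flat n (\<rho> x))"
  by (rule smooth_comp_derivative_tower[where f=flat, OF flat_has_derivative])

text \<open>A finite sum of bumps \<open>flat 0 (r\<^sup>2 - \<parallel>x - c\<parallel>\<^sup>2)\<close> over a cover of \<open>K\<close> by balls whose closures miss \<open>F\<close>.\<close>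

lemma smooth_bump_exists:
  fixes K F :: "(real^'n) set"
  assumes K: "compact K" and F: "closed F" and KF: "K \<inter> F = {}"
  obtains \<rho> W where "smooth_fun \<rho>" "\<And>x. \<rho> x \<ge> 0" "\<And>x. x \<in> K \<Longrightarrow> \<rho> x > 0"
    "open W" "F \<subseteq> W" "\<And>x. x \<in> W \<Longrightarrow> \<rho> x = 0"
proof -
  have "\<exists>r>0. cball x r \<inter> F = {}" if "x \<in> K" for x
  proof -
    have "x \<in> - F" using \<open>x \<in> K\<close> KF by auto
    then obtain e where "e > 0" "ball x e \<subseteq> - F"
      using F open_contains_ball[of "- F"] by auto
    then show ?thesis by (intro exI[of _ "e/2"]) (auto simp: subset_eq)
  qed
  then obtain r where r: "\<And>x. x \<in> K \<Longrightarrow> r x > 0 \<and> cball x (r x) \<inter> F = {}" by metis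
  have "K \<subseteq> (\<Union>c\<in>K. ball c (r c))" using r by force
  then obtain C where C: "C \<subseteq> K" "finite C" "K \<subseteq> (\<Union>c\<in>C. ball c (r c))"
    using compactE_image[OF K, of K "\<lambda>c. ball c (r c)"] by auto
  define \<rho> where "\<rho> x = (\<Sum>c\<in>C. flat 0 (r c ^ 2 - norm (x - c) ^ 2))" for x
  define W where "W = - (\<Union>c\<in>C. cball c (r c))"
  show thesis
  proof
    show "smooth_fun \<rho>"
      unfolding \<rho>_def by (intro smooth_sum smooth_flat smooth_diff smooth_const smooth_sqdist C)
    show "\<rho> x \<ge> 0" for x unfolding \<rho>_def by (intro sum_nonneg) (simp add: flat_nonneg)
    show "\<rho> x > 0" if "x \<in> K" for x
    proof -
      obtain c where c: "c \<in> C" "x \<in> ball c (r c)" using C \<open>x \<in> K\<close> by blast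
      then have "norm (x - c) ^ 2 < r c ^ 2"
        using r C by (simp add: dist_norm norm_minus_commute power_strict_mono)
      then show ?thesis
        unfolding \<rho>_def using C(2) c(1) by (intro sum_pos2[of C c]) (auto simp: flat_pos flat_nonneg)
    qed
    show "open W" unfolding W_def using C(2) by (intro open_Compl closed_UN) auto
    show "F \<subseteq> W" unfolding W_def using r C(1) by blast
    show "\<rho> x = 0" if "x \<in> W" for x
      unfolding \<rho>_def
    proof (intro sum.neutral ballI)
      fix c assume c: "c \<in> C"
      then have "r c < norm (x - c)" "r c > 0"
        using \<open>x \<in> W\<close> r C by (auto simp: W_def dist_norm norm_minus_commute)
      then have "r c ^ 2 < norm (x - c) ^ 2" by (simp add: power_strict_mono)
      then show "flat 0 (r c ^ 2 - norm (x - c) ^ 2) = 0" by (simp add: flat_nonpos)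
    qed
  qed
qed

text \<open>With \<open>m = min\<^sub>K \<rho> > 0\<close>, the function \<open>flat 0 \<rho> / (flat 0 \<rho> + flat 0 (m - \<rho>))\<close> is \<open>1\<close> on \<open>K\<close> and \<open>0\<close>
  where \<open>\<rho>\<close> vanishes; its denominator never vanishes because \<open>\<rho> \<ge> 0\<close>.\<close>

lemma smooth_Urysohn:
  fixes K F :: "(real^'n) set"
  assumes K: "compact K" and F: "closed F" and KF: "K \<inter> F = {}"
  obtains \<eta> W where "smooth_fun \<eta>" "open W" "F \<subseteq> W" "\<And>x. x \<in> W \<Longrightarrow> \<eta> x = 0"
    "\<And>x. x \<in> K \<Longrightarrow> \<eta> x = 1"
proof -
  obtain \<rho> W where \<rho>: "smooth_fun \<rho>" "\<And>x. \<rho> x \<ge> 0" "\<And>x. x \<in> K \<Longrightarrow> \<rho> x > 0"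
    and W: "open W" "F \<subseteq> W" "\<And>x. x \<in> W \<Longrightarrow> \<rho> x = 0"
    using smooth_bump_exists[OF assms] by metis
  obtain m where m: "m > 0" "\<And>x. x \<in> K \<Longrightarrow> m \<le> \<rho> x"
  proof (cases "K = {}")
    case False
    then obtain x0 where "x0 \<in> K" "\<forall>y\<in>K. \<rho> x0 \<le> \<rho> y"
      using continuous_attains_inf[OF K _ smooth_fun_continuous_on[OF \<rho>(1)]] by blast
    then show thesis using that[of "\<rho> x0"] \<rho>(3) by blast
  qed (use that[of 1] in simp)
  define D where "D x = flat 0 (\<rho> x) + flat 0 (m - \<rho> x)" for x
  have D: "D x \<noteq> 0" for x
    using flat_pos[of "\<rho> x"] flat_pos[of "m - \<rho> x"] flat_nonneg[of "\<rho> x"] flat_nonneg[of "m - \<rho> x"] \<rho>(2)[of x] m(1)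
    unfolding D_def by (cases "\<rho> x > 0") auto
  show thesis
  proof
    show "smooth_fun (\<lambda>x. flat 0 (\<rho> x) / D x)"
      unfolding D_def using D[unfolded D_def]
      by (intro smooth_divide smooth_add smooth_flat smooth_diff smooth_const \<rho>(1))
    show "flat 0 (\<rho> x) / D x = 0" if "x \<in> W" for x
      using W(3)[OF that] by (simp add: flat_nonpos)
    show "flat 0 (\<rho> x) / D x = 1" if "x \<in> K" for x
      using m(2)[OF that] \<rho>(3)[OF that] by (simp add: D_def flat_nonpos flat_pos less_imp_neq[symmetric])
  qed (use W in auto)
qed

subsection \<open>Local connectedness of \<open>C\<^sup>2\<close> domains at the boundary\<close>

lemma gradient_near_affine_bound:
  fixes \<psi> :: "'a::real_inner \<Rightarrow> real"
  assumes "convex S" "w \<in> S" "w' \<in> S"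
    and "\<And>x. x \<in> S \<Longrightarrow> (\<psi> has_derivative (\<lambda>h. g x \<bullet> h)) (at x)"
    and "\<And>x. x \<in> S \<Longrightarrow> norm (g x - v) \<le> c"
  shows "\<psi> w' \<le> \<psi> w + v \<bullet> (w' - w) + c * norm (w' - w)"
proof -
  let ?f = "\<lambda>x. \<psi> x - v \<bullet> x"
  have "norm (?f w' - ?f w) \<le> c * norm (w' - w)"
  proof (rule differentiable_bound[where f'="\<lambda>x h. (g x - v) \<bullet> h", OF assms(1)])
    fix x assume x: "x \<in> S"
    have "(?f has_derivative (\<lambda>h. g x \<bullet> h - v \<bullet> h)) (at x)"
      by (intro has_derivative_diff assms(4)[OF x] has_derivative_inner_right has_derivative_ident)
    then show "(?f has_derivative (\<lambda>h. (g x - v) \<bullet> h)) (at x within S)"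
      by (simp add: inner_diff_left has_derivative_at_withinI)
    show "onorm (\<lambda>h. (g x - v) \<bullet> h) \<le> c"
    proof (rule onorm_bound)
      show "0 \<le> c" using assms(5)[OF x] norm_ge_zero order_trans by blast
      fix h
      have "norm ((g x - v) \<bullet> h) \<le> norm (g x - v) * norm h"
        using Cauchy_Schwarz_ineq2 by simp
      also have "\<dots> \<le> c * norm h" using assms(5)[OF x] by (intro mult_right_mono) auto
      finally show "norm ((g x - v) \<bullet> h) \<le> c * norm h" .
    qed
  qed (use assms(2,3) in auto)
  then show ?thesis unfolding inner_diff_right real_norm_def by linarith
qed

text \<open>Near a boundary point the defining function \<open>\<psi>\<close> is affine with slope \<open>v = \<nabla>\<psi>(x\<^sub>0) \<noteq> 0\<close> up to an
  error \<open>\<parallel>v\<parallel>/3 \<cdot> \<parallel>w' - w\<parallel>\<close>, by continuity of \<open>\<nabla>\<psi>\<close>.\<close>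

lemma C2_domain_boundary_chart:
  fixes \<Omega> :: "(real^'n) set"
  assumes "C2_domain \<Omega>" and "x0 \<in> frontier \<Omega>"
  obtains v d \<psi> where "v \<noteq> 0" "d > 0" "\<And>w. w \<in> ball x0 d \<Longrightarrow> w \<in> \<Omega> \<longleftrightarrow> \<psi> w < 0"
    "\<And>w w'. w \<in> ball x0 d \<Longrightarrow> w' \<in> ball x0 d \<Longrightarrow> \<psi> w' \<le> \<psi> w + v \<bullet> (w' - w) + norm v / 3 * norm (w' - w)"
proof -
  obtain r \<psi> where r: "r > 0" and c2: "C2_on \<psi> (ball x0 r)"
    and nz: "\<forall>x\<in>ball x0 r. frechet_derivative \<psi> (at x) \<noteq> (\<lambda>h. 0)"
    and eq: "\<Omega> \<inter> ball x0 r = {x\<in>ball x0 r. \<psi> x < 0}"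
    using assms unfolding C2_domain_def by blast
  obtain g H where gd: "\<forall>x\<in>ball x0 r. (\<psi> has_derivative (\<lambda>h. g x \<bullet> h)) (at x)"
    and Hd: "\<forall>x\<in>ball x0 r. (g has_derivative (\<lambda>h. H x *v h)) (at x)"
    using c2 unfolding C2_on_def by blast
  define v where "v = g x0"
  have x0r: "x0 \<in> ball x0 r" using r by simp
  have fd: "frechet_derivative \<psi> (at x0) = (\<lambda>h. v \<bullet> h)"
    using frechet_derivative_at[OF gd[rule_format, OF x0r]] by (simp add: v_def)
  have "v \<noteq> 0"
  proof
    assume "v = 0"
    then have "frechet_derivative \<psi> (at x0) = (\<lambda>h. 0)" using fd by simp
    then show False using nz x0r by blast
  qed
  then have a: "norm v / 3 > 0" by simp
  have "isCont g x0" using has_derivative_continuous[OF Hd[rule_format, OF x0r]] .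
  from this[unfolded continuous_at_eps_delta, rule_format, OF a]
  obtain \<delta> where \<delta>: "\<delta> > 0" "\<And>w. dist w x0 < \<delta> \<Longrightarrow> dist (g w) v < norm v / 3"
    unfolding v_def by blast
  define d where "d = min \<delta> r"
  show thesis
  proof
    show "v \<noteq> 0" "d > 0" using \<open>v \<noteq> 0\<close> \<delta> r by (simp_all add: d_def)
    show "w \<in> \<Omega> \<longleftrightarrow> \<psi> w < 0" if "w \<in> ball x0 d" for w
    proof -
      have "w \<in> ball x0 r" using that by (simp add: d_def)
      then show ?thesis using eq by blast
    qed
    show "\<psi> w' \<le> \<psi> w + v \<bullet> (w' - w) + norm v / 3 * norm (w' - w)"
      if "w \<in> ball x0 d" "w' \<in> ball x0 d" for w w'
    proof (rule gradient_near_affine_bound[OF convex_ball that])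
      fix x assume x: "x \<in> ball x0 d"
      then show "(\<psi> has_derivative (\<lambda>h. g x \<bullet> h)) (at x)" using gd by (simp add: d_def)
      show "norm (g x - v) \<le> norm v / 3"
        using \<delta>(2)[of x] x by (simp add: d_def dist_norm norm_minus_commute)
    qed
  qed
qed

locale sublevel_chart =
  fixes \<Omega> :: "'a::real_inner set" and \<psi> :: "'a \<Rightarrow> real" and v x0 :: 'a and d :: real
  assumes v_nonzero: "v \<noteq> 0"
    and mem_iff: "\<And>w. w \<in> ball x0 d \<Longrightarrow> w \<in> \<Omega> \<longleftrightarrow> \<psi> w < 0"
    and affine_bound: "\<And>w w'. w \<in> ball x0 d \<Longrightarrow> w' \<in> ball x0 d \<Longrightarrow>
      \<psi> w' \<le> \<psi> w + v \<bullet> (w' - w) + norm v / 3 * norm (w' - w)"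
begin

lemma descent_mem:
  assumes "y \<in> \<Omega>" "y \<in> ball x0 d" "w \<in> ball x0 d"
    and "v \<bullet> (w - y) + norm v / 3 * norm (w - y) \<le> 0"
  shows "w \<in> \<Omega>"
proof -
  have "\<psi> w \<le> \<psi> y" using affine_bound[OF assms(2,3)] assms(4) by simp
  also have "\<psi> y < 0" using mem_iff[OF assms(2)] assms(1) by simp
  finally show ?thesis using mem_iff[OF assms(3)] by simp
qed

lemma shift_mem_ball:
  assumes "\<epsilon> > 0" "m \<in> ball x0 \<epsilon>" "0 \<le> s" "s * norm v \<le> 4 * \<epsilon>"
  shows "m - s *\<^sub>R v \<in> ball x0 (6 * \<epsilon>)"
proof -
  have "dist x0 (m - s *\<^sub>R v) \<le> dist x0 m + dist m (m - s *\<^sub>R v)"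
    by (rule dist_triangle)
  moreover have "dist m (m - s *\<^sub>R v) = s * norm v" using assms(3) by (simp add: dist_norm)
  moreover have "dist x0 m < \<epsilon>" using assms(2) by simp
  ultimately have "dist x0 (m - s *\<^sub>R v) < 6 * \<epsilon>" using assms(1,4) by linarith
  then show ?thesis by simp
qed

text \<open>Two points \<open>y, z\<close> near \<open>x\<^sub>0\<close> are joined inside \<open>\<Omega>\<close> by the polygon \<open>y, y - t v, z - t v, z\<close> with
  \<open>t = 4\<epsilon>/\<parallel>v\<parallel>\<close>: the step \<open>-t v\<close> against the gradient lowers \<open>\<psi>\<close> by more than the sideways step and the
  error term can raise it.\<close>

lemma segment_down_subset:
  assumes \<epsilon>: "\<epsilon> > 0" "6 * \<epsilon> \<le> d" and y: "y \<in> \<Omega>" "y \<in> ball x0 \<epsilon>"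
  shows "closed_segment y (y - (4 * \<epsilon> / norm v) *\<^sub>R v) \<subseteq> \<Omega> \<inter> ball x0 (6 * \<epsilon>)"
proof
  define a t where "a = norm v" and "t = 4 * \<epsilon> / a"
  have a: "a > 0" and t: "t > 0" "t * a = 4 * \<epsilon>" using v_nonzero \<epsilon> by (simp_all add: a_def t_def)
  fix w assume "w \<in> closed_segment y (y - (4 * \<epsilon> / norm v) *\<^sub>R v)"
  then obtain u where u: "0 \<le> u" "u \<le> 1" "w = (1 - u) *\<^sub>R y + u *\<^sub>R (y - t *\<^sub>R v)"
    unfolding closed_segment_def a_def t_def by blast
  define s where "s = u * t"
  have "s * a = u * (4 * \<epsilon>)" by (simp add: s_def mult.assoc t(2))
  also have "\<dots> \<le> 4 * \<epsilon>" using u(1,2) \<epsilon>(1) by (simp add: mult_left_le_one_le)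
  finally have s: "0 \<le> s" "s * a \<le> 4 * \<epsilon>" "w = y - s *\<^sub>R v"
    using u t(1) by (simp_all add: s_def algebra_simps)
  have w: "w \<in> ball x0 (6 * \<epsilon>)" using shift_mem_ball[OF \<epsilon>(1) y(2) s(1)] s(2,3) by (simp add: a_def)
  have "v \<bullet> (w - y) + a / 3 * norm (w - y) = - s * (2 / 3 * a * a)"
    using s(1) by (simp add: s(3) a_def dot_square_norm power2_eq_square)
  also have "\<dots> \<le> 0" using s(1) a by simp
  finally have "w \<in> \<Omega>"
    using descent_mem[OF y(1) _ _] y(2) w \<epsilon> by (simp add: a_def)
  then show "w \<in> \<Omega> \<inter> ball x0 (6 * \<epsilon>)" using w by simp
qed

lemma segment_across_subset:
  assumes \<epsilon>: "\<epsilon> > 0" "6 * \<epsilon> \<le> d" and y: "y \<in> \<Omega>" "y \<in> ball x0 \<epsilon>" and z: "z \<in> ball x0 \<epsilon>"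
  shows "closed_segment (y - (4 * \<epsilon> / norm v) *\<^sub>R v) (z - (4 * \<epsilon> / norm v) *\<^sub>R v) \<subseteq> \<Omega> \<inter> ball x0 (6 * \<epsilon>)"
proof
  define a t where "a = norm v" and "t = 4 * \<epsilon> / a"
  have a: "a > 0" and t: "t > 0" "t * a = 4 * \<epsilon>" using v_nonzero \<epsilon> by (simp_all add: a_def t_def)
  fix w assume "w \<in> closed_segment (y - (4 * \<epsilon> / norm v) *\<^sub>R v) (z - (4 * \<epsilon> / norm v) *\<^sub>R v)"
  then obtain u where u: "0 \<le> u" "u \<le> 1" "w = (1 - u) *\<^sub>R (y - t *\<^sub>R v) + u *\<^sub>R (z - t *\<^sub>R v)"
    unfolding closed_segment_def a_def t_def by blast
  define m where "m = (1 - u) *\<^sub>R y + u *\<^sub>R z"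
  have "m \<in> closed_segment y z" using u by (auto simp: m_def closed_segment_def)
  then have m: "m \<in> ball x0 \<epsilon>" using y(2) z convex_ball convex_contains_segment by blast
  have w: "w = m - t *\<^sub>R v" using u(3) by (simp add: m_def algebra_simps)
  have "dist m y \<le> dist x0 m + dist x0 y"
    using dist_triangle[of m y x0] by (simp add: dist_commute)
  then have my: "norm (m - y) < 2 * \<epsilon>" using m y(2) by (simp add: dist_norm)
  have "v \<bullet> (w - y) = v \<bullet> (m - y) - t * (a * a)"
    by (simp add: w inner_diff_right a_def dot_square_norm power2_eq_square)
  moreover have "v \<bullet> (m - y) \<le> a * norm (m - y)"
    using norm_cauchy_schwarz[of v "m - y"] by (simp add: a_def)
  moreover have "a * norm (m - y) \<le> 2 * (a * \<epsilon>)" using my a by simp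
  moreover have "t * (a * a) = 4 * (a * \<epsilon>)" using t(2) by (metis mult.assoc mult.commute)
  moreover have "norm (w - y) \<le> 6 * \<epsilon>"
    using norm_triangle_ineq4[of "m - y" "t *\<^sub>R v"] my t by (simp add: w a_def algebra_simps)
  then have "a / 3 * norm (w - y) \<le> 2 * (a * \<epsilon>)" using a by simp
  ultimately have "v \<bullet> (w - y) + a / 3 * norm (w - y) \<le> 0" by linarith
  moreover have "w \<in> ball x0 (6 * \<epsilon>)"
    using shift_mem_ball[OF \<epsilon>(1) m, of t] t by (simp add: w a_def)
  ultimately show "w \<in> \<Omega> \<inter> ball x0 (6 * \<epsilon>)"
    using descent_mem[OF y(1)] y(2) \<epsilon> by (simp add: a_def)
qed

lemma locally_connected:
  assumes "d > 0" "\<rho> > 0"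
  shows "\<exists>\<epsilon>>0. \<forall>y\<in>\<Omega> \<inter> ball x0 \<epsilon>. \<forall>z\<in>\<Omega> \<inter> ball x0 \<epsilon>.
      \<exists>C. connected C \<and> y \<in> C \<and> z \<in> C \<and> C \<subseteq> \<Omega> \<inter> ball x0 \<rho>"
proof (intro exI[of _ "min d \<rho> / 6"] conjI ballI)
  define \<epsilon> where "\<epsilon> = min d \<rho> / 6"
  define t where "t = 4 * \<epsilon> / norm v"
  have \<epsilon>: "\<epsilon> > 0" "6 * \<epsilon> \<le> d" "ball x0 (6 * \<epsilon>) \<subseteq> ball x0 \<rho>"
    using assms by (simp_all add: \<epsilon>_def subset_ball)
  then show "min d \<rho> / 6 > 0" by (simp add: \<epsilon>_def)
  fix y z assume y: "y \<in> \<Omega> \<inter> ball x0 (min d \<rho> / 6)" and z: "z \<in> \<Omega> \<inter> ball x0 (min d \<rho> / 6)"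
  define C where "C = closed_segment y (y - t *\<^sub>R v) \<union> closed_segment (y - t *\<^sub>R v) (z - t *\<^sub>R v)
     \<union> closed_segment (z - t *\<^sub>R v) z"
  have "closed_segment (z - t *\<^sub>R v) z = closed_segment z (z - t *\<^sub>R v)"
    by (rule closed_segment_commute)
  then have "C \<subseteq> \<Omega> \<inter> ball x0 (6 * \<epsilon>)"
    using segment_down_subset[OF \<epsilon>(1,2)] segment_across_subset[OF \<epsilon>(1,2)] y z
    unfolding C_def t_def \<epsilon>_def[symmetric] by auto
  then have "C \<subseteq> \<Omega> \<inter> ball x0 \<rho>" using \<epsilon>(3) by blast
  moreover have "connected C" unfolding C_def
    by (intro connected_Un connected_segment) (use ends_in_segment in blast)+
  moreover have "y \<in> C" "z \<in> C" unfolding C_def by (simp_all add: ends_in_segment)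
  ultimately show "\<exists>C. connected C \<and> y \<in> C \<and> z \<in> C \<and> C \<subseteq> \<Omega> \<inter> ball x0 \<rho>" by blast
qed

end

lemma C2_domain_locally_connected:
  fixes \<Omega> :: "(real^'n) set"
  assumes "C2_domain \<Omega>" "x0 \<in> frontier \<Omega>" "\<rho> > 0"
  shows "\<exists>\<epsilon>>0. \<forall>y\<in>\<Omega> \<inter> ball x0 \<epsilon>. \<forall>z\<in>\<Omega> \<inter> ball x0 \<epsilon>.
      \<exists>C. connected C \<and> y \<in> C \<and> z \<in> C \<and> C \<subseteq> \<Omega> \<inter> ball x0 \<rho>"
proof -
  obtain v d \<psi> where chart: "v \<noteq> 0" "d > 0" "\<And>w. w \<in> ball x0 d \<Longrightarrow> w \<in> \<Omega> \<longleftrightarrow> \<psi> w < 0"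
    "\<And>w w'. w \<in> ball x0 d \<Longrightarrow> w' \<in> ball x0 d \<Longrightarrow> \<psi> w' \<le> \<psi> w + v \<bullet> (w' - w) + norm v / 3 * norm (w' - w)"
    using C2_domain_boundary_chart[OF assms(1,2)] by metis
  interpret sublevel_chart \<Omega> \<psi> v x0 d
    by unfold_locales (use chart in auto)
  show ?thesis by (rule locally_connected[OF chart(2) assms(3)])
qed

subsection \<open>Extending test functions from \<open>\<Omega>\<^sub>2\<close> to \<open>\<Omega>\<^sub>1\<close>\<close>

definition zero_ext :: "'a set \<Rightarrow> ('a \<Rightarrow> 'b::zero) \<Rightarrow> 'a \<Rightarrow> 'b" where
  "zero_ext A f x = (if x \<in> A then f x else 0)"

lemma grad_eq_on_open:
  assumes "open U" "x \<in> U" "\<And>y. y \<in> U \<Longrightarrow> f y = h y" "smooth_fun h"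
  shows "grad f x = grad h x"
proof -
  have "(f has_derivative frechet_derivative h (at x)) (at x)"
    using has_derivative_transform_within_open[OF smooth_fun_has_derivative[OF assms(4)] assms(1,2)] assms(3)
    by metis
  then have "frechet_derivative f (at x) = frechet_derivative h (at x)"
    using frechet_derivative_at by metis
  then show ?thesis by (simp add: grad_def partial_deriv_def)
qed

lemma grad_eq_0_on_open:
  assumes "open U" "x \<in> U" "\<And>y. y \<in> U \<Longrightarrow> f y = 0"
  shows "grad f x = 0"
proof -
  have "(f has_derivative (\<lambda>h. 0)) (at x)"
    using has_derivative_transform_within_open[OF has_derivative_const[of 0] assms(1,2)] assms(3)
    by metis
  then have "frechet_derivative f (at x) = (\<lambda>h. 0)"
    using frechet_derivative_at by metis
  then show ?thesis by (simp add: grad_def partial_deriv_def vec_eq_iff)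
qed

text \<open>This is where the boundary regularity of \<open>\<Omega>\<^sub>1\<close> enters: a point of \<open>\<partial>\<Omega>\<^sub>2 \<inter> \<partial>\<Omega>\<^sub>1\<close> outside \<open>\<Gamma>\<^sub>2\<close>
  that is approached by \<open>\<Omega>\<^sub>1 \<setminus> \<Omega>\<^sub>2\<close> can be joined to \<open>\<Omega>\<^sub>2\<close> inside \<open>\<Omega>\<^sub>1\<close> near it, and the joining
  continuum meets \<open>\<partial>\<Omega>\<^sub>2 \<inter> \<Omega>\<^sub>1 \<subseteq> \<Gamma>\<^sub>2\<close>.\<close>

lemma closure_Int_closure_outside_subset:
  fixes \<Omega>1 \<Omega>2 \<Gamma>2 :: "(real^'n) set"
  assumes \<Omega>1: "C2_domain \<Omega>1" and \<Omega>2: "open \<Omega>2" "\<Omega>2 \<subseteq> \<Omega>1"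
    and \<Gamma>2: "closed \<Gamma>2" "frontier \<Omega>2 \<inter> \<Omega>1 \<subseteq> \<Gamma>2"
  shows "closure \<Omega>2 \<inter> closure (\<Omega>1 - closure \<Omega>2) \<subseteq> \<Gamma>2"
proof
  fix x assume x: "x \<in> closure \<Omega>2 \<inter> closure (\<Omega>1 - closure \<Omega>2)"
  have "\<Omega>2 \<inter> closure (\<Omega>1 - closure \<Omega>2) = {}"
    using open_Int_closure_eq_empty[OF \<Omega>2(1)] closure_subset by fastforce
  then have x2: "x \<in> frontier \<Omega>2" using x \<Omega>2(1) by (auto simp: frontier_def interior_open)
  show "x \<in> \<Gamma>2"
  proof (cases "x \<in> \<Omega>1")
    case True
    then show ?thesis using x2 \<Gamma>2(2) by blast
  next
    case False
    have "open \<Omega>1" using \<Omega>1 by (simp add: C2_domain_def)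
    moreover have "x \<in> closure \<Omega>1" using x \<Omega>2(2) closure_mono by blast
    ultimately have x1: "x \<in> frontier \<Omega>1" using False by (simp add: frontier_def interior_open)
    show ?thesis
    proof (rule ccontr)
      assume "x \<notin> \<Gamma>2"
      then obtain \<rho> where \<rho>: "\<rho> > 0" "ball x \<rho> \<subseteq> - \<Gamma>2"
        using \<Gamma>2(1) open_contains_ball[of "- \<Gamma>2"] by auto
      obtain \<epsilon> where \<epsilon>: "\<epsilon> > 0" and conn: "\<forall>y\<in>\<Omega>1 \<inter> ball x \<epsilon>. \<forall>z\<in>\<Omega>1 \<inter> ball x \<epsilon>.
          \<exists>C. connected C \<and> y \<in> C \<and> z \<in> C \<and> C \<subseteq> \<Omega>1 \<inter> ball x \<rho>"
        using C2_domain_locally_connected[OF \<Omega>1 x1 \<rho>(1)] by blast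
      obtain y where y: "y \<in> \<Omega>1 - closure \<Omega>2" "dist x y < \<epsilon>"
        using closure_approachableD[OF _ \<epsilon>] x by blast
      obtain z where z: "z \<in> \<Omega>2" "dist x z < \<epsilon>"
        using closure_approachableD[OF _ \<epsilon>] x by blast
      have "y \<in> \<Omega>1 \<inter> ball x \<epsilon>" "z \<in> \<Omega>1 \<inter> ball x \<epsilon>" using y z \<Omega>2(2) by auto
      then obtain C where C: "connected C" "y \<in> C" "z \<in> C" "C \<subseteq> \<Omega>1 \<inter> ball x \<rho>"
        using conn by blast
      have "C \<inter> \<Omega>2 \<noteq> {}" "C - \<Omega>2 \<noteq> {}" using C(2,3) y(1) z(1) closure_subset by auto
      then obtain w where "w \<in> C" "w \<in> frontier \<Omega>2" using connected_Int_frontier C(1) by blast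
      then show False using C(4) \<Gamma>2(2) \<rho>(2) by auto
    qed
  qed
qed

lemma extension_cutoff:
  fixes \<Omega>1 \<Omega>2 \<Gamma>1 \<Gamma>2 U :: "(real^'n) set"
  assumes \<Omega>1: "C2_domain \<Omega>1" and \<Omega>2: "open \<Omega>2" "bounded \<Omega>2" "\<Omega>2 \<subseteq> \<Omega>1"
    and \<Gamma>1: "closed \<Gamma>1" "\<Gamma>1 \<subseteq> frontier \<Omega>1"
    and \<Gamma>2: "closed \<Gamma>2" "frontier \<Omega>2 \<inter> \<Omega>1 \<subseteq> \<Gamma>2" "\<Gamma>1 \<inter> frontier \<Omega>2 \<subseteq> \<Gamma>2"
    and U: "open U" "\<Gamma>2 \<subseteq> U"
  obtains \<eta> W where "smooth_fun \<eta>" "open W" "\<Gamma>1 \<subseteq> W" "\<Omega>1 - closure \<Omega>2 \<subseteq> W"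
    "frontier \<Omega>1 - frontier \<Omega>2 \<subseteq> W" "\<And>x. x \<in> W \<Longrightarrow> \<eta> x = 0" "\<And>x. x \<in> closure \<Omega>2 - U \<Longrightarrow> \<eta> x = 1"
proof -
  have "open \<Omega>1" using \<Omega>1 by (simp add: C2_domain_def)
  then have fr1: "frontier \<Omega>1 = closure \<Omega>1 - \<Omega>1" and fr2: "frontier \<Omega>2 = closure \<Omega>2 - \<Omega>2"
    using \<Omega>2(1) by (simp_all add: frontier_def interior_open)
  define K where "K = closure \<Omega>2 - U"
  define F where "F = closure (\<Omega>1 - closure \<Omega>2) \<union> \<Gamma>1"
  have K: "compact K"
    unfolding K_def using \<Omega>2(2) U(1) by (intro compact_diff) (simp_all add: compact_closure)
  have F: "closed F" unfolding F_def using \<Gamma>1(1) by (intro closed_Un) auto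
  have "\<Gamma>1 \<inter> closure \<Omega>2 \<subseteq> \<Gamma>2"
    using \<Gamma>1(2) \<Gamma>2(3) \<Omega>2(3) unfolding fr1 fr2 by blast
  moreover have "closure \<Omega>2 \<inter> closure (\<Omega>1 - closure \<Omega>2) \<subseteq> \<Gamma>2"
    by (rule closure_Int_closure_outside_subset[OF \<Omega>1 \<Omega>2(1,3) \<Gamma>2(1,2)])
  ultimately have KF: "K \<inter> F = {}" using U(2) unfolding K_def F_def by blast
  obtain \<eta> W where \<eta>: "smooth_fun \<eta>" "open W" "F \<subseteq> W"
    "\<And>x. x \<in> W \<Longrightarrow> \<eta> x = 0" "\<And>x. x \<in> K \<Longrightarrow> \<eta> x = 1"
    using smooth_Urysohn[OF K F KF] by metis
  show thesis
  proof (rule that[OF \<eta>(1,2) _ _ _ \<eta>(4)])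
    show "\<Gamma>1 \<subseteq> W" "\<Omega>1 - closure \<Omega>2 \<subseteq> W"
      using \<eta>(3) closure_subset[of "\<Omega>1 - closure \<Omega>2"] unfolding F_def by blast+
    show "\<eta> x = 1" if "x \<in> closure \<Omega>2 - U" for x using \<eta>(5) that unfolding K_def .
    have "frontier \<Omega>1 - frontier \<Omega>2 \<subseteq> - closure \<Omega>2 \<inter> closure \<Omega>1"
      using \<Omega>2(3) unfolding fr1 fr2 by blast
    also have "\<dots> \<subseteq> closure (- closure \<Omega>2 \<inter> \<Omega>1)" by (rule open_Int_closure_subset) auto
    also have "\<dots> \<subseteq> W" using \<eta>(3) unfolding F_def by (simp add: Diff_eq inf_commute)
    finally show "frontier \<Omega>1 - frontier \<Omega>2 \<subseteq> W" .
  qed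
qed

lemma test_class_extension:
  fixes \<Omega>1 \<Omega>2 \<Gamma>1 \<Gamma>2 :: "(real^'n) set"
  assumes \<Omega>1: "C2_domain \<Omega>1" and \<Omega>2: "open \<Omega>2" "bounded \<Omega>2" "\<Omega>2 \<subseteq> \<Omega>1"
    and \<Gamma>1: "closed \<Gamma>1" "\<Gamma>1 \<subseteq> frontier \<Omega>1"
    and \<Gamma>2: "closed \<Gamma>2" "frontier \<Omega>2 \<inter> \<Omega>1 \<subseteq> \<Gamma>2" "\<Gamma>1 \<inter> frontier \<Omega>2 \<subseteq> \<Gamma>2"
    and \<phi>: "\<phi> \<in> test_class \<Omega>2 \<Gamma>2"
  obtains \<psi> where "\<psi> \<in> test_class \<Omega>1 \<Gamma>1" "\<And>x. x \<in> closure \<Omega>2 \<Longrightarrow> \<psi> x = \<phi> x"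
    "\<And>x. x \<in> \<Omega>1 - \<Omega>2 \<Longrightarrow> \<psi> x = 0" "\<And>x. x \<in> frontier \<Omega>1 - frontier \<Omega>2 \<Longrightarrow> \<psi> x = 0"
    "\<And>x. x \<in> \<Omega>1 \<Longrightarrow> grad \<psi> x = zero_ext \<Omega>2 (grad \<phi>) x"
proof -
  obtain U where U: "open U" "\<Gamma>2 \<subseteq> U" "\<And>x. x \<in> U \<inter> closure \<Omega>2 \<Longrightarrow> \<phi> x = 0"
    and s\<phi>: "smooth_fun \<phi>"
    using \<phi> unfolding test_class_def by blast
  obtain \<eta> W where \<eta>: "smooth_fun \<eta>" "open W" "\<Gamma>1 \<subseteq> W" "\<Omega>1 - closure \<Omega>2 \<subseteq> W"
    "frontier \<Omega>1 - frontier \<Omega>2 \<subseteq> W" "\<And>x. x \<in> W \<Longrightarrow> \<eta> x = 0" "\<And>x. x \<in> closure \<Omega>2 - U \<Longrightarrow> \<eta> x = 1"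
    using extension_cutoff[OF \<Omega>1 \<Omega>2 \<Gamma>1 \<Gamma>2 U(1,2)] by metis
  define \<psi> where "\<psi> x = \<phi> x * \<eta> x" for x
  define V where "V = \<Omega>1 \<inter> (U \<union> W)"
  have "open V" unfolding V_def using \<Omega>1 U(1) \<eta>(2) by (intro open_Int open_Un) (simp_all add: C2_domain_def)
  have "\<Omega>1 - \<Omega>2 \<subseteq> V"
  proof
    fix x assume x: "x \<in> \<Omega>1 - \<Omega>2"
    show "x \<in> V"
    proof (cases "x \<in> closure \<Omega>2")
      case True
      then have "x \<in> frontier \<Omega>2" using x \<Omega>2(1) by (simp add: frontier_def interior_open)
      then show ?thesis using x \<Gamma>2(2) U(2) by (auto simp: V_def)
    next
      case False
      then show ?thesis using x \<eta>(4) by (auto simp: V_def)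
    qed
  qed
  have \<psi>_V: "\<psi> y = 0" if y: "y \<in> V" for y
  proof (cases "y \<in> W")
    case True
    then show ?thesis by (simp add: \<psi>_def \<eta>(6))
  next
    case False
    then have "y \<in> U \<inter> closure \<Omega>2" using y \<eta>(4) by (auto simp: V_def)
    then show ?thesis by (simp add: \<psi>_def U(3))
  qed
  show thesis
  proof
    show "\<psi> \<in> test_class \<Omega>1 \<Gamma>1"
      unfolding test_class_def
    proof (intro CollectI conjI exI[of _ W] ballI)
      show "smooth_fun \<psi>" unfolding \<psi>_def by (rule smooth_mult[OF s\<phi> \<eta>(1)])
      show "\<psi> x = 0" if "x \<in> W \<inter> closure \<Omega>1" for x using that \<eta>(6) by (simp add: \<psi>_def)
    qed (use \<eta>(2,3) in auto)
    show on_closure: "\<psi> x = \<phi> x" if "x \<in> closure \<Omega>2" for x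
      using U(3)[of x] \<eta>(7)[of x] that by (cases "x \<in> U") (simp_all add: \<psi>_def)
    show "\<psi> x = 0" if "x \<in> \<Omega>1 - \<Omega>2" for x
      using \<psi>_V \<open>\<Omega>1 - \<Omega>2 \<subseteq> V\<close> that by blast
    show "\<psi> x = 0" if "x \<in> frontier \<Omega>1 - frontier \<Omega>2" for x
      using \<eta>(5,6) that by (auto simp: \<psi>_def)
    show "grad \<psi> x = zero_ext \<Omega>2 (grad \<phi>) x" if "x \<in> \<Omega>1" for x
    proof (cases "x \<in> \<Omega>2")
      case True
      have "\<psi> y = \<phi> y" if "y \<in> \<Omega>2" for y using on_closure closure_subset that by blast
      from grad_eq_on_open[OF \<Omega>2(1) True this s\<phi>] show ?thesis using True by (simp add: zero_ext_def)
    next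
      case False
      then have "x \<in> V" using that \<open>\<Omega>1 - \<Omega>2 \<subseteq> V\<close> by blast
      from grad_eq_0_on_open[OF \<open>open V\<close> this \<psi>_V] show ?thesis using False by (simp add: zero_ext_def)
    qed
  qed
qed

subsection \<open>Zero extension of Sobolev functions and traces\<close>

lemma sob_norm_cong:
  assumes "\<And>x. x \<in> D \<Longrightarrow> u x = u' x" "\<And>x. x \<in> D \<Longrightarrow> G x = G' x"
  shows "sob_norm p D u G = sob_norm p D u' G'"
proof -
  have "(\<integral>\<^sup>+ x \<in> D. ennreal (\<bar>u x / t\<bar> powr p x + (norm (G x) / t) powr p x) \<partial>lebesgue) =
        (\<integral>\<^sup>+ x \<in> D. ennreal (\<bar>u' x / t\<bar> powr p x + (norm (G' x) / t) powr p x) \<partial>lebesgue)" for t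
    by (rule nn_integral_cong) (simp add: assms indicator_def)
  then show ?thesis unfolding sob_norm_def by simp
qed

lemma sob_norm_zero_ext:
  assumes "D2 \<subseteq> D1"
  shows "sob_norm p D1 (zero_ext D2 u) (zero_ext D2 G) = sob_norm p D2 u G"
proof -
  have "(\<integral>\<^sup>+ x \<in> D1. ennreal (\<bar>zero_ext D2 u x / t\<bar> powr p x + (norm (zero_ext D2 G x) / t) powr p x) \<partial>lebesgue) =
        (\<integral>\<^sup>+ x \<in> D2. ennreal (\<bar>u x / t\<bar> powr p x + (norm (G x) / t) powr p x) \<partial>lebesgue)" for t
    by (rule nn_integral_cong) (use assms in \<open>auto simp: zero_ext_def indicator_def\<close>)
  then show ?thesis unfolding sob_norm_def by simp
qed

lemma sets_hausdorff_measure [simp]: "sets (hausdorff_measure s :: 'a::metric_space measure) = sets borel"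
  and space_hausdorff_measure [simp]: "space (hausdorff_measure s :: 'a::metric_space measure) = UNIV"
proof -
  interpret sigma_algebra "UNIV :: 'a set" "sets borel"
    using sets.sigma_algebra_axioms[of "borel :: 'a measure"] by simp
  show "sets (hausdorff_measure s :: 'a measure) = sets borel"
    "space (hausdorff_measure s :: 'a measure) = UNIV"
    unfolding hausdorff_measure_def by simp_all
qed

lemma frontier_in_sets_hausdorff: "frontier D \<inter> space (hausdorff_measure s) \<in> sets (hausdorff_measure s)"
  by simp

lemma nn_integral_surface_measure:
  fixes D :: "(real^'n) set"
  shows "(\<integral>\<^sup>+ x. f x \<partial>surface_measure D) =
    (\<integral>\<^sup>+ x. f x * indicator (frontier D) x \<partial>hausdorff_measure (real CARD('n) - 1))"
  unfolding surface_measure_def by (rule nn_integral_restrict_space[OF frontier_in_sets_hausdorff])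

lemma AE_surface_measure_iff:
  fixes D :: "(real^'n) set"
  shows "(AE x in surface_measure D. P x) \<longleftrightarrow>
    (AE x in hausdorff_measure (real CARD('n) - 1). x \<in> frontier D \<longrightarrow> P x)"
  unfolding surface_measure_def by (rule AE_restrict_space_iff[OF frontier_in_sets_hausdorff])

lemma W_trace_AE_zero_on:
  fixes D \<Gamma> :: "(real^'n) set"
  assumes W: "W_trace p D \<Gamma> u G g" and \<Gamma>: "closed \<Gamma>" "\<Gamma> \<subseteq> frontier D"
  shows "AE x in surface_measure D. x \<in> \<Gamma> \<longrightarrow> g x = 0"
proof -
  obtain \<phi> where g: "g \<in> borel_measurable (surface_measure D)" and \<phi>: "\<And>k. \<phi> k \<in> test_class D \<Gamma>"
    and lim: "((\<lambda>k. \<integral>\<^sup>+ x. ennreal \<bar>\<phi> k x - g x\<bar> \<partial>surface_measure D) \<longlongrightarrow> 0) sequentially"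
    using W unfolding W_trace_def by blast
  have \<phi>0: "\<phi> k x = 0" if "x \<in> \<Gamma>" for k x
    using \<phi>[of k] that \<Gamma>(2) unfolding test_class_def frontier_def by blast
  have "indicator \<Gamma> \<in> borel_measurable (surface_measure D)"
    using \<Gamma>(1) unfolding surface_measure_def
    by (intro measurable_restrict_space1 borel_measurable_indicator) (simp add: borel_closed)
  then have meas: "(\<lambda>x. ennreal (indicator \<Gamma> x * \<bar>g x\<bar>)) \<in> borel_measurable (surface_measure D)"
    using g by measurable
  have "(\<integral>\<^sup>+ x. ennreal (indicator \<Gamma> x * \<bar>g x\<bar>) \<partial>surface_measure D) \<le>
        (\<integral>\<^sup>+ x. ennreal \<bar>\<phi> k x - g x\<bar> \<partial>surface_measure D)" for k
    by (rule nn_integral_mono) (simp add: indicator_def \<phi>0)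
  then have "(\<integral>\<^sup>+ x. ennreal (indicator \<Gamma> x * \<bar>g x\<bar>) \<partial>surface_measure D) \<le> 0"
    by (intro tendsto_lowerbound[OF lim]) auto
  then have "AE x in surface_measure D. ennreal (indicator \<Gamma> x * \<bar>g x\<bar>) = 0"
    using nn_integral_0_iff_AE[OF meas] by simp
  then show ?thesis by (rule AE_mp) (auto simp: indicator_def)
qed

lemma bnd_norm_zero_ext:
  fixes D1 D2 :: "(real^'n) set"
  assumes "AE x in surface_measure D2. x \<notin> frontier D1 \<longrightarrow> g x = 0"
  shows "bnd_norm q D1 (zero_ext (frontier D2) g) = bnd_norm q D2 g"
proof -
  have AE: "AE x in hausdorff_measure (real CARD('n) - 1). x \<in> frontier D2 \<longrightarrow> x \<notin> frontier D1 \<longrightarrow> g x = 0"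
    using assms by (simp add: AE_surface_measure_iff)
  have "(\<integral>\<^sup>+ x. ennreal (\<bar>zero_ext (frontier D2) g x / t\<bar> powr q x) \<partial>surface_measure D1) =
        (\<integral>\<^sup>+ x. ennreal (\<bar>g x / t\<bar> powr q x) \<partial>surface_measure D2)" for t
    unfolding nn_integral_surface_measure
    by (rule nn_integral_cong_AE, use AE in eventually_elim) (auto simp: zero_ext_def indicator_def)
  then show ?thesis unfolding bnd_norm_def by simp
qed

lemma AE_zero_ext_eq_0_iff:
  fixes D1 D2 :: "(real^'n) set"
  assumes "AE x in surface_measure D2. x \<notin> frontier D1 \<longrightarrow> g x = 0"
  shows "(AE x in surface_measure D1. zero_ext (frontier D2) g x = 0) \<longleftrightarrow>
    (AE x in surface_measure D2. g x = 0)"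
  using assms unfolding AE_surface_measure_iff
  by (intro iffI; elim eventually_rev_mp; intro always_eventually) (auto simp: zero_ext_def)

lemma measurable_zero_ext_surface_measure:
  fixes D1 D2 :: "(real^'n) set"
  assumes "g \<in> borel_measurable (surface_measure D2)"
  shows "zero_ext (frontier D2) g \<in> borel_measurable (surface_measure D1)"
proof -
  have "zero_ext (frontier D2) g \<in> borel_measurable (hausdorff_measure (real CARD('n) - 1))"
    using assms measurable_restrict_space_iff[OF frontier_in_sets_hausdorff, of 0 borel g]
    unfolding surface_measure_def zero_ext_def by simp
  then show ?thesis unfolding surface_measure_def by (rule measurable_restrict_space1)
qed

lemma nn_integral_surface_zero_ext_le:
  fixes D1 D2 :: "(real^'n) set"
  assumes "\<And>x. x \<in> frontier D1 \<inter> frontier D2 \<Longrightarrow> \<psi> x = \<phi> x"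
    and "\<And>x. x \<in> frontier D1 - frontier D2 \<Longrightarrow> \<psi> x = 0"
  shows "(\<integral>\<^sup>+ x. ennreal \<bar>\<psi> x - zero_ext (frontier D2) g x\<bar> \<partial>surface_measure D1) \<le>
    (\<integral>\<^sup>+ x. ennreal \<bar>\<phi> x - g x\<bar> \<partial>surface_measure D2)"
  unfolding nn_integral_surface_measure
proof (rule nn_integral_mono)
  fix x
  show "ennreal \<bar>\<psi> x - zero_ext (frontier D2) g x\<bar> * indicator (frontier D1) x \<le>
        ennreal \<bar>\<phi> x - g x\<bar> * indicator (frontier D2) x"
    using assms[of x] by (cases "x \<in> frontier D1"; cases "x \<in> frontier D2") (auto simp: zero_ext_def)
qed

lemma W_trace_zero_ext:
  fixes \<Omega>1 \<Omega>2 \<Gamma>1 \<Gamma>2 :: "(real^'n) set"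
  assumes \<Omega>1: "C2_domain \<Omega>1" and \<Omega>2: "open \<Omega>2" "bounded \<Omega>2" "\<Omega>2 \<subseteq> \<Omega>1"
    and \<Gamma>1: "closed \<Gamma>1" "\<Gamma>1 \<subseteq> frontier \<Omega>1"
    and \<Gamma>2: "closed \<Gamma>2" "frontier \<Omega>2 \<inter> \<Omega>1 \<subseteq> \<Gamma>2" "\<Gamma>1 \<inter> frontier \<Omega>2 \<subseteq> \<Gamma>2"
    and W: "W_trace p \<Omega>2 \<Gamma>2 u G g"
  shows "W_trace p \<Omega>1 \<Gamma>1 (zero_ext \<Omega>2 u) (zero_ext \<Omega>2 G) (zero_ext (frontier \<Omega>2) g)"
proof -
  obtain \<phi> where u: "u \<in> borel_measurable lebesgue" and G: "G \<in> borel_measurable lebesgue"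
    and g: "g \<in> borel_measurable (surface_measure \<Omega>2)" and \<phi>: "\<And>k. \<phi> k \<in> test_class \<Omega>2 \<Gamma>2"
    and sob: "((\<lambda>k. sob_norm p \<Omega>2 (\<lambda>x. \<phi> k x - u x) (\<lambda>x. grad (\<phi> k) x - G x)) \<longlongrightarrow> 0) sequentially"
    and tr: "((\<lambda>k. \<integral>\<^sup>+ x. ennreal \<bar>\<phi> k x - g x\<bar> \<partial>surface_measure \<Omega>2) \<longlongrightarrow> 0) sequentially"
    using W unfolding W_trace_def by blast
  have "\<forall>k. \<exists>\<psi>. \<psi> \<in> test_class \<Omega>1 \<Gamma>1 \<and> (\<forall>x\<in>closure \<Omega>2. \<psi> x = \<phi> k x) \<and>
      (\<forall>x\<in>\<Omega>1 - \<Omega>2. \<psi> x = 0) \<and> (\<forall>x\<in>frontier \<Omega>1 - frontier \<Omega>2. \<psi> x = 0) \<and>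
      (\<forall>x\<in>\<Omega>1. grad \<psi> x = zero_ext \<Omega>2 (grad (\<phi> k)) x)"
    using test_class_extension[OF \<Omega>1 \<Omega>2 \<Gamma>1 \<Gamma>2 \<phi>] by metis
  then obtain \<psi> where \<psi>: "\<And>k. \<psi> k \<in> test_class \<Omega>1 \<Gamma>1" "\<And>k x. x \<in> closure \<Omega>2 \<Longrightarrow> \<psi> k x = \<phi> k x"
    "\<And>k x. x \<in> \<Omega>1 - \<Omega>2 \<Longrightarrow> \<psi> k x = 0" "\<And>k x. x \<in> frontier \<Omega>1 - frontier \<Omega>2 \<Longrightarrow> \<psi> k x = 0"
    "\<And>k x. x \<in> \<Omega>1 \<Longrightarrow> grad (\<psi> k) x = zero_ext \<Omega>2 (grad (\<phi> k)) x"
    by metis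
  have "sob_norm p \<Omega>1 (\<lambda>x. \<psi> k x - zero_ext \<Omega>2 u x) (\<lambda>x. grad (\<psi> k) x - zero_ext \<Omega>2 G x) =
        sob_norm p \<Omega>1 (zero_ext \<Omega>2 (\<lambda>x. \<phi> k x - u x)) (zero_ext \<Omega>2 (\<lambda>x. grad (\<phi> k) x - G x))" for k
    by (rule sob_norm_cong) (use \<psi>(2,3,5) subsetD[OF closure_subset[of \<Omega>2]] in \<open>auto simp: zero_ext_def\<close>)
  then have sob': "sob_norm p \<Omega>1 (\<lambda>x. \<psi> k x - zero_ext \<Omega>2 u x) (\<lambda>x. grad (\<psi> k) x - zero_ext \<Omega>2 G x) =
        sob_norm p \<Omega>2 (\<lambda>x. \<phi> k x - u x) (\<lambda>x. grad (\<phi> k) x - G x)" for k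
    by (simp add: sob_norm_zero_ext[OF \<Omega>2(3)])
  show ?thesis
    unfolding W_trace_def
  proof (intro conjI exI[of _ \<psi>] allI)
    show "zero_ext \<Omega>2 u \<in> borel_measurable lebesgue" "zero_ext \<Omega>2 G \<in> borel_measurable lebesgue"
      using \<Omega>2(1) unfolding zero_ext_def by (auto intro!: measurable_If_set u G)
    show "zero_ext (frontier \<Omega>2) g \<in> borel_measurable (surface_measure \<Omega>1)"
      by (rule measurable_zero_ext_surface_measure[OF g])
    show "\<psi> k \<in> test_class \<Omega>1 \<Gamma>1" for k by (rule \<psi>(1))
    show "((\<lambda>k. sob_norm p \<Omega>1 (\<lambda>x. \<psi> k x - zero_ext \<Omega>2 u x) (\<lambda>x. grad (\<psi> k) x - zero_ext \<Omega>2 G x))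
        \<longlongrightarrow> 0) sequentially"
      using sob by (simp add: sob')
    show "((\<lambda>k. \<integral>\<^sup>+ x. ennreal \<bar>\<psi> k x - zero_ext (frontier \<Omega>2) g x\<bar> \<partial>surface_measure \<Omega>1) \<longlongrightarrow> 0) sequentially"
      using \<psi>(2,4)
      by (intro tendsto_sandwich[OF _ _ tendsto_const tr] always_eventually allI nn_integral_surface_zero_ext_le)
         (auto simp: frontier_def)
  qed
qed

theorem lemma5p2:
  fixes \<Omega>1 \<Omega>2 \<Gamma>1 \<Gamma>2 :: "(real^'n) set" and p q :: "real^'n \<Rightarrow> real"
  assumes "CARD('n) \<ge> 2"
    and "C2_domain \<Omega>1" and "C2_domain \<Omega>2"
    and "closed \<Gamma>1" and "\<Gamma>1 \<subseteq> frontier \<Omega>1"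
    and "closed \<Gamma>2" and "\<Gamma>2 \<subseteq> frontier \<Omega>2"
    and "\<forall>x\<in>closure \<Omega>1. p x \<ge> 1" and "\<forall>x\<in>closure \<Omega>1. q x \<ge> 1"
    and "p \<in> borel_measurable (restrict_space lebesgue (closure \<Omega>1))"
    and "q \<in> borel_measurable (restrict_space lebesgue (closure \<Omega>1))"
    and "q \<in> borel_measurable (surface_measure \<Omega>1)"
    and "q \<in> borel_measurable (surface_measure \<Omega>2)"
    and "\<Omega>2 \<subseteq> \<Omega>1"
    and "frontier \<Omega>2 \<inter> \<Omega>1 \<subseteq> \<Gamma>2"
    and "\<Gamma>1 \<inter> frontier \<Omega>2 \<subseteq> \<Gamma>2"
  shows "T_const p q \<Omega>1 \<Gamma>1 \<le> T_const p q \<Omega>2 \<Gamma>2"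
proof -
  have \<Omega>2: "open \<Omega>2" "bounded \<Omega>2" using \<open>C2_domain \<Omega>2\<close> by (simp_all add: C2_domain_def)
  have "open \<Omega>1" using \<open>C2_domain \<Omega>1\<close> by (simp add: C2_domain_def)
  then have "frontier \<Omega>2 - frontier \<Omega>1 \<subseteq> \<Gamma>2"
    using \<open>\<Omega>2 \<subseteq> \<Omega>1\<close> \<open>frontier \<Omega>2 \<inter> \<Omega>1 \<subseteq> \<Gamma>2\<close> closure_mono[of \<Omega>2 \<Omega>1]
    by (auto simp: frontier_def interior_open)
  show ?thesis
    unfolding T_const_def[of p q \<Omega>2 \<Gamma>2]
  proof (rule Inf_greatest, clarify)
    fix u G g assume W: "W_trace p \<Omega>2 \<Gamma>2 u G g" and g: "\<not> (AE x in surface_measure \<Omega>2. g x = 0)"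
    have "AE x in surface_measure \<Omega>2. x \<in> \<Gamma>2 \<longrightarrow> g x = 0"
      by (rule W_trace_AE_zero_on[OF W assms(6,7)])
    then have g_outside: "AE x in surface_measure \<Omega>2. x \<notin> frontier \<Omega>1 \<longrightarrow> g x = 0"
      using \<open>frontier \<Omega>2 - frontier \<Omega>1 \<subseteq> \<Gamma>2\<close> unfolding AE_surface_measure_iff
      by (elim AE_mp) (auto intro!: AE_I2)
    have "W_trace p \<Omega>1 \<Gamma>1 (zero_ext \<Omega>2 u) (zero_ext \<Omega>2 G) (zero_ext (frontier \<Omega>2) g)"
      using W_trace_zero_ext[OF assms(2) \<Omega>2 assms(14,4,5,6,15,16) W] .
    moreover have "\<not> (AE x in surface_measure \<Omega>1. zero_ext (frontier \<Omega>2) g x = 0)"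
      using g by (simp add: AE_zero_ext_eq_0_iff[OF g_outside])
    ultimately have "T_const p q \<Omega>1 \<Gamma>1 \<le>
        sob_norm p \<Omega>1 (zero_ext \<Omega>2 u) (zero_ext \<Omega>2 G) / bnd_norm q \<Omega>1 (zero_ext (frontier \<Omega>2) g)"
      unfolding T_const_def by (blast intro: Inf_lower)
    then show "T_const p q \<Omega>1 \<Gamma>1 \<le> sob_norm p \<Omega>2 u G / bnd_norm q \<Omega>2 g"
      by (simp add: sob_norm_zero_ext[OF \<open>\<Omega>2 \<subseteq> \<Omega>1\<close>] bnd_norm_zero_ext[OF g_outside])
  qed
qed

end
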